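(* Let $\mathcal{A}=\langle\Sigma,Q_\mathcal{A},q^0_\mathcal{A},\delta_\mathcal{A},\alpha_\mathcal{A}\rangle$ be a nice GFG-tNCW, let $\mathcal{S}$ be any frontier of $\mathcal{A}$, let $\mathcal{B}_\mathcal{S}$ be the automaton constructed from $\mathcal{A}$ and $\mathcal{S}$ (with any admissible choice of initial state), and let $\mathcal{C}$ be the quotient automaton constructed from $\mathcal{B}_\mathcal{S}$, as described in the context. Then $\mathcal{C}$ is $\alpha$-maximal up to homogeneity.
   Context: A tNCW is $\mathcal{A}=\langle\Sigma,Q,q_0,\delta,\alpha\rangle$: finite alphabet $\Sigma$, finite state set $Q$, initial state $q_0$, transition function $\delta:Q\times\Sigma\to 2^Q\setminus\{\emptyset\}$ with transition relation $\Delta=\{\langle q,\sigma,s\rangle:s\in\delta(q,\sigma)\}$, and $\alpha\subseteq\Delta$. $\alpha$-transitions are those in $\alpha$, $\bar\alpha$-transitions those in $\Delta\setminus\alpha$; $\delta^{\alpha}(q,\sigma)$, $\delta^{\bar\alpha}(q,\sigma)$ denote the $\sigma$-successors via $\alpha$-, resp. $\bar\alpha$-transitions. A run on $w=\sigma_1\sigma_2\cdots$ is $r_0r_1\cdots$ with $r_0=q_0$, $r_{i+1}\in\delta(r_i,\sigma_{i+1})$; accepting iff it traverses $\alpha$-transitions finitely often; $L(\mathcal{A})$ the accepted language. $\mathcal{A}^q$ is $\mathcal{A}$ with initial state $q$; $q\sim_\mathcal{A}s$ iff $L(\mathcal{A}^q)=L(\mathcal{A}^s)$. GFG: there is $f:\Sigma^*\to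 Q$ with $f(\epsilon)=q_0$, $\langle f(u),\sigma,f(u\sigma)\rangle\in\Delta$, and $f$'s run on every $w\in L(\mathcal{A})$ accepting; $q$ is GFG if $\mathcal{A}^q$ is. Semantically deterministic: all $\sigma$-successors of a state pairwise $\sim$; safe deterministic: $|\delta^{\bar\alpha}(q,\sigma)|\le 1$; normal: a $\bar\alpha$-path from $q$ to $s$ implies one from $s$ to $q$. Nice: all states reachable and GFG, normal, safe deterministic, semantically deterministic. Safe components: SCCs of the graph with edges $q\to q'$ iff $q'\in\delta^{\bar\alpha}(q,\sigma)$ for some $\sigma$; $\mathbb{S}(\mathcal{A})$ denotes their set. A run is safe if it uses no $\alpha$-transition; $L_{safe}(\mathcal{A}^q)$ is the set of words with a safe run from $q$. $q\approx_\mathcal{A}s$ iff $q\sim s$ and $L_{safe}(\mathcal{A}^q)=L_{safe}(\mathcal{A}^s)$; $q\precsim s$ iff $q\sim s$ and $L_{safe}(\mathcal{A}^q)\subseteq L_{safe}(\mathcal{A}^s)$. $\alpha$-homogenous: for all $q,\sigma$, $\delta^{\alpha}(q,\sigma)=\emptyset$ or $\delta^{\bar\alpha}(q,\sigma)=\emptyset$. An allowed transition of $\mathcal{A}$ is a triple $\langle q,\sigma,s\rangle\in Q\times\Sigma\times Q$ such that some $s'\sim s$ has $\langle q,\sigma,s'\rangle\in\Delta$. $\mathcal{A}$ is $\alpha$-maximal up to homogeneity if it is $\alpha$-homogenous and for every $q,\sigma$ with $\delta^{\bar\alpha}(q,\sigma)=\emptyset$ all allowed transitions in $\{q\}\times\{\sigma\}\times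 Q$ are in $\Delta$. Construction (Step 1): define $H\subseteq\mathbb{S}(\mathcal{A})^2$ by $H(S,S')$ iff there are $q\in S$, $q'\in S'$ with $q\precsim q'$. A set $\mathcal{S}\subseteq\mathbb{S}(\mathcal{A})$ is a frontier if for every $S\in\mathbb{S}(\mathcal{A})$ there is $S'\in\mathcal{S}$ with $H(S,S')$, and for distinct $S,S'\in\mathcal{S}$, neither $H(S,S')$ nor $H(S',S)$. Given a frontier $\mathcal{S}$, $\mathcal{B}_\mathcal{S}=\langle\Sigma,Q_\mathcal{S},q^0_\mathcal{S},\delta_\mathcal{S},\alpha_\mathcal{S}\rangle$ where $Q_\mathcal{S}$ is the union of the components in $\mathcal{S}$; $q^0_\mathcal{S}=q^0_\mathcal{A}$ if $q^0_\mathcal{A}\in Q_\mathcal{S}$, and otherwise $q^0_\mathcal{S}$ is some $q'\in Q_\mathcal{S}$ with $q^0_\mathcal{A}\precsim q'$; for $q\in Q_\mathcal{S}$ and $\sigma\in\Sigma$: if $\delta^{\bar\alpha}_\mathcal{A}(q,\sigma)\ne\emptyset$ then $\delta^{\bar\alpha}_\mathcal{S}(q,\sigma)=\delta^{\bar\alpha}_\mathcal{A}(q,\sigma)$ and $\delta^{\alpha}_\mathcal{S}(q,\sigma)=\emptyset$; otherwise $\delta^{\bar\alpha}_\mathcal{S}(q,\sigma)=\emptyset$ and $\delta^{\alpha}_\mathcal{S}(q,\sigma)=\{q'\in Q_\mathcal{S}:\exists q''\in\delta^\alpha_\mathcal{A}(q,\sigma),\ q'\sim_\mathcal{A}q''\}$.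 (Step 2): for $\mathcal{B}=\mathcal{B}_\mathcal{S}$ with states $Q$, initial state $q_0$, let $[q]=\{q':q\approx_\mathcal{B}q'\}$ and $\mathcal{C}=\langle\Sigma,\{[q]:q\in Q\},[q_0],\delta_\mathcal{C},\alpha_\mathcal{C}\rangle$, where $\langle[q],\sigma,[p]\rangle\in\Delta_\mathcal{C}$ iff there are $q'\in[q]$, $p'\in[p]$ with $\langle q',\sigma,p'\rangle\in\Delta_\mathcal{B}$, and such a transition is in $\alpha_\mathcal{C}$ iff $\langle q',\sigma,p'\rangle\in\alpha_\mathcal{B}$ (this is independent of the choice of $q',p'$). *)

theory Defs
  imports Main
begin

record ('a, 'q) tncw =
  alph   :: "'a set"
  states :: "'q set"
  init   :: 'q
  trans  :: "('q \<times> 'a \<times> 'q) set"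
  acc    :: "('q \<times> 'a \<times> 'q) set"

definition wf_tncw :: "('a, 'q) tncw \<Rightarrow> bool" where
  "wf_tncw A \<longleftrightarrow> finite (alph A) \<and> finite (states A) \<and> init A \<in> states A
     \<and> trans A \<subseteq> states A \<times> alph A \<times> states A
     \<and> (\<forall>q\<in>states A. \<forall>\<sigma>\<in>alph A. \<exists>s. (q, \<sigma>, s) \<in> trans A)
     \<and> acc A \<subseteq> trans A"

definition safe_trans :: "('a, 'q) tncw \<Rightarrow> ('q \<times> 'a \<times> 'q) set" where
  "safe_trans A = trans A - acc A"

definition succ_acc :: "('a, 'q) tncw \<Rightarrow> 'q \<Rightarrow> 'a \<Rightarrow> 'q set" where
  "succ_acc A q \<sigma> = {s. (q, \<sigma>, s) \<in> acc A}"

definition succ_safe :: "('a, 'q) tncw \<Rightarrow> 'q \<Rightarrow> 'a \<Rightarrow> 'q set" where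
  "succ_safe A q \<sigma> = {s. (q, \<sigma>, s) \<in> safe_trans A}"

definition is_word :: "('a, 'q) tncw \<Rightarrow> (nat \<Rightarrow> 'a) \<Rightarrow> bool" where
  "is_word A w \<longleftrightarrow> (\<forall>i. w i \<in> alph A)"

definition is_run :: "('a, 'q) tncw \<Rightarrow> 'q \<Rightarrow> (nat \<Rightarrow> 'a) \<Rightarrow> (nat \<Rightarrow> 'q) \<Rightarrow> bool" where
  "is_run A q w r \<longleftrightarrow> r 0 = q \<and> (\<forall>i. (r i, w i, r (Suc i)) \<in> trans A)"

definition accepting :: "('a, 'q) tncw \<Rightarrow> (nat \<Rightarrow> 'a) \<Rightarrow> (nat \<Rightarrow> 'q) \<Rightarrow> bool" where
  "accepting A w r \<longleftrightarrow> finite {i. (r i, w i, r (Suc i)) \<in> acc A}"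

definition lang :: "('a, 'q) tncw \<Rightarrow> 'q \<Rightarrow> (nat \<Rightarrow> 'a) set" where
  "lang A q = {w. is_word A w \<and> (\<exists>r. is_run A q w r \<and> accepting A w r)}"

definition lang_safe :: "('a, 'q) tncw \<Rightarrow> 'q \<Rightarrow> (nat \<Rightarrow> 'a) set" where
  "lang_safe A q = {w. is_word A w \<and>
      (\<exists>r. r 0 = q \<and> (\<forall>i. (r i, w i, r (Suc i)) \<in> safe_trans A))}"

definition lequiv :: "('a, 'q) tncw \<Rightarrow> 'q \<Rightarrow> 'q \<Rightarrow> bool" where
  "lequiv A q s \<longleftrightarrow> lang A q = lang A s"

definition strong_equiv :: "('a, 'q) tncw \<Rightarrow> 'q \<Rightarrow> 'q \<Rightarrow> bool" where
  "strong_equiv A q s \<longleftrightarrow> lequiv A q s \<and> lang_safe A q = lang_safe A s"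

definition safe_below :: "('a, 'q) tncw \<Rightarrow> 'q \<Rightarrow> 'q \<Rightarrow> bool" where
  "safe_below A q s \<longleftrightarrow> lequiv A q s \<and> lang_safe A q \<subseteq> lang_safe A s"

definition gfg_from :: "('a, 'q) tncw \<Rightarrow> 'q \<Rightarrow> bool" where
  "gfg_from A q \<longleftrightarrow> (\<exists>f :: 'a list \<Rightarrow> 'q.
      f [] = q
      \<and> (\<forall>u \<sigma>. set u \<subseteq> alph A \<and> \<sigma> \<in> alph A \<longrightarrow> (f u, \<sigma>, f (u @ [\<sigma>])) \<in> trans A)
      \<and> (\<forall>w \<in> lang A q. accepting A w (\<lambda>i. f (map w [0..<i]))))"

definition gfg :: "('a, 'q) tncw \<Rightarrow> bool" where
  "gfg A \<longleftrightarrow> gfg_from A (init A)"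

definition sem_det :: "('a, 'q) tncw \<Rightarrow> bool" where
  "sem_det A \<longleftrightarrow> (\<forall>q \<sigma> s s'. (q, \<sigma>, s) \<in> trans A \<and> (q, \<sigma>, s') \<in> trans A \<longrightarrow> lequiv A s s')"

definition safe_det :: "('a, 'q) tncw \<Rightarrow> bool" where
  "safe_det A \<longleftrightarrow> (\<forall>q \<sigma> s s'. s \<in> succ_safe A q \<sigma> \<and> s' \<in> succ_safe A q \<sigma> \<longrightarrow> s = s')"

definition safe_edges :: "('a, 'q) tncw \<Rightarrow> ('q \<times> 'q) set" where
  "safe_edges A = {(q, s). \<exists>\<sigma>. (q, \<sigma>, s) \<in> safe_trans A}"

definition normal :: "('a, 'q) tncw \<Rightarrow> bool" where
  "normal A \<longleftrightarrow> (\<forall>q s. (q, s) \<in> (safe_edges A)\<^sup>* \<longrightarrow> (s, q) \<in> (safe_edges A)\<^sup>*)"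

definition reachable :: "('a, 'q) tncw \<Rightarrow> 'q \<Rightarrow> bool" where
  "reachable A q \<longleftrightarrow> (init A, q) \<in> {(p, s). \<exists>\<sigma>. (p, \<sigma>, s) \<in> trans A}\<^sup>*"

definition nice :: "('a, 'q) tncw \<Rightarrow> bool" where
  "nice A \<longleftrightarrow> (\<forall>q \<in> states A. reachable A q \<and> gfg_from A q)
     \<and> normal A \<and> safe_det A \<and> sem_det A"

definition safe_comps :: "('a, 'q) tncw \<Rightarrow> 'q set set" where
  "safe_comps A = {C. \<exists>q \<in> states A. C = {s \<in> states A.
       (q, s) \<in> (safe_edges A)\<^sup>* \<and> (s, q) \<in> (safe_edges A)\<^sup>*}}"

definition H_rel :: "('a, 'q) tncw \<Rightarrow> 'q set \<Rightarrow> 'q set \<Rightarrow> bool" where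
  "H_rel A S S' \<longleftrightarrow> (\<exists>q \<in> S. \<exists>q' \<in> S'. safe_below A q q')"

definition frontier :: "('a, 'q) tncw \<Rightarrow> 'q set set \<Rightarrow> bool" where
  "frontier A SS \<longleftrightarrow> SS \<subseteq> safe_comps A
     \<and> (\<forall>S \<in> safe_comps A. \<exists>S' \<in> SS. H_rel A S S')
     \<and> (\<forall>S \<in> SS. \<forall>S' \<in> SS. S \<noteq> S' \<longrightarrow> \<not> H_rel A S S' \<and> \<not> H_rel A S' S)"

definition admissible_init :: "('a, 'q) tncw \<Rightarrow> 'q set set \<Rightarrow> 'q \<Rightarrow> bool" where
  "admissible_init A SS q0 \<longleftrightarrow>
     (if init A \<in> \<Union>SS then q0 = init A else q0 \<in> \<Union>SS \<and> safe_below A (init A) q0)"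

definition B_aut :: "('a, 'q) tncw \<Rightarrow> 'q set set \<Rightarrow> 'q \<Rightarrow> ('a, 'q) tncw" where
  "B_aut A SS q0 =
     \<lparr> alph = alph A,
       states = \<Union>SS,
       init = q0,
       trans = {(q, \<sigma>, s). q \<in> \<Union>SS \<and> \<sigma> \<in> alph A \<and> s \<in> succ_safe A q \<sigma>}
             \<union> {(q, \<sigma>, s). q \<in> \<Union>SS \<and> \<sigma> \<in> alph A \<and> succ_safe A q \<sigma> = {} \<and> s \<in> \<Union>SS
                   \<and> (\<exists>q'' \<in> succ_acc A q \<sigma>. lequiv A s q'')},
       acc = {(q, \<sigma>, s). q \<in> \<Union>SS \<and> \<sigma> \<in> alph A \<and> succ_safe A q \<sigma> = {} \<and> s \<in> \<Union>SS
                   \<and> (\<exists>q'' \<in> succ_acc A q \<sigma>. lequiv A s q'')} \<rparr>"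

definition cls :: "('a, 'q) tncw \<Rightarrow> 'q \<Rightarrow> 'q set" where
  "cls B q = {q' \<in> states B. strong_equiv B q q'}"

definition quot_aut :: "('a, 'q) tncw \<Rightarrow> ('a, 'q set) tncw" where
  "quot_aut B =
     \<lparr> alph = alph B,
       states = cls B ` states B,
       init = cls B (init B),
       trans = {(cls B q, \<sigma>, cls B p) | q \<sigma> p. q \<in> states B \<and> p \<in> states B \<and> (q, \<sigma>, p) \<in> trans B},
       acc = {(cls B q, \<sigma>, cls B p) | q \<sigma> p. q \<in> states B \<and> p \<in> states B \<and> (q, \<sigma>, p) \<in> acc B} \<rparr>"

definition alpha_homogenous :: "('a, 'q) tncw \<Rightarrow> bool" where
  "alpha_homogenous A \<longleftrightarrow> (\<forall>q \<sigma>. succ_acc A q \<sigma> = {} \<or> succ_safe A q \<sigma> = {})"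

definition allowed_trans :: "('a, 'q) tncw \<Rightarrow> 'q \<Rightarrow> 'a \<Rightarrow> 'q \<Rightarrow> bool" where
  "allowed_trans A q \<sigma> s \<longleftrightarrow> q \<in> states A \<and> \<sigma> \<in> alph A \<and> s \<in> states A
     \<and> (\<exists>s'. lequiv A s' s \<and> (q, \<sigma>, s') \<in> trans A)"

definition alpha_max_up_to_hom :: "('a, 'q) tncw \<Rightarrow> bool" where
  "alpha_max_up_to_hom A \<longleftrightarrow> alpha_homogenous A
     \<and> (\<forall>q \<in> states A. \<forall>\<sigma> \<in> alph A. succ_safe A q \<sigma> = {} \<longrightarrow>
          (\<forall>s. allowed_trans A q \<sigma> s \<longrightarrow> (q, \<sigma>, s) \<in> trans A))"

end

(* B_S agrees with A on the languages of its states. An accepting run of A is shadowed in B_S by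
   following the safe transitions of A while possible and otherwise jumping to a frontier state
   that safely dominates the current state of the A-run; once the A-run has become safe, the
   shadow jumps at most once more. Hence B_S is semantically and safe deterministic, normal and,
   by construction, alpha-maximal up to homogeneity.
   Merging strongly equivalent states preserves this: strongly equivalent states have safe
   sigma-successors for the same letters sigma (their safe languages coincide, and by normality
   the target of a safe transition has a nonempty safe language), so the quotient C stays
   alpha-homogenous and has the same languages, and an allowed transition of C lifts to an
   allowed, hence present, transition of B_S. *)

theory Submission
  imports Defs
begin

section \<open>Residual and safe languages\<close>

lemma wf_trans_in_states:
  "wf_tncw A \<Longrightarrow> (q, \<sigma>, s) \<in> trans A \<Longrightarrow> q \<in> states A \<and> \<sigma> \<in> alph A \<and> s \<in> states A"
  unfolding wf_tncw_def by blast

lemma wf_trans_total: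
  "wf_tncw A \<Longrightarrow> q \<in> states A \<Longrightarrow> \<sigma> \<in> alph A \<Longrightarrow> \<exists>s. (q, \<sigma>, s) \<in> trans A"
  unfolding wf_tncw_def by blast

lemma wf_acc_subset_trans: "wf_tncw A \<Longrightarrow> acc A \<subseteq> trans A"
  unfolding wf_tncw_def by blast

lemma safe_trans_subset_trans: "safe_trans A \<subseteq> trans A"
  unfolding safe_trans_def by blast

lemma strong_equiv_iff_safe_below:
  "strong_equiv A q s \<longleftrightarrow> safe_below A q s \<and> safe_below A s q"
  unfolding strong_equiv_def safe_below_def lequiv_def by blast

lemma lang_safe_subset_lang: "lang_safe A q \<subseteq> lang A q"
  unfolding lang_safe_def lang_def is_run_def accepting_def safe_trans_def by auto

lemma case_nat_head_tail: "case_nat (w 0) (\<lambda>n. w (Suc n)) = w"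
  by (rule ext) (simp split: nat.split)

lemma suffix_residual_chain:
  assumes "\<And>i. i < k \<Longrightarrow> L (p (Suc i)) \<subseteq> {v. case_nat (w i) v \<in> L (p i)}"
    and "(\<lambda>n. w (n + k)) \<in> L (p k)"
  shows "w \<in> L (p 0)"
  using assms
proof (induction k arbitrary: w p)
  case 0
  then show ?case by simp
next
  case (Suc k)
  have "(\<lambda>n. w (Suc n)) \<in> L (p 1)"
    using Suc.IH[of "\<lambda>i. p (Suc i)" "\<lambda>n. w (Suc n)"] Suc.prems by simp
  then show ?case using Suc.prems(1)[of 0] case_nat_head_tail[of w] by auto
qed

lemma lang_prepend:
  assumes "wf_tncw A" "(q, \<sigma>, t) \<in> trans A" "v \<in> lang A t"
  shows "case_nat \<sigma> v \<in> lang A q"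
proof -
  obtain r where v: "is_word A v" and r: "is_run A t v r" and fin: "accepting A v r"
    using assms(3) unfolding lang_def by blast
  have "is_run A q (case_nat \<sigma> v) (case_nat q r)"
    using r assms(2) unfolding is_run_def by (auto split: nat.split)
  moreover have "{i. (case_nat q r i, case_nat \<sigma> v i, case_nat q r (Suc i)) \<in> acc A}
      \<subseteq> insert 0 (Suc ` {i. (r i, v i, r (Suc i)) \<in> acc A})"
  proof
    fix i assume "i \<in> {i. (case_nat q r i, case_nat \<sigma> v i, case_nat q r (Suc i)) \<in> acc A}"
    then show "i \<in> insert 0 (Suc ` {i. (r i, v i, r (Suc i)) \<in> acc A})" by (cases i) auto
  qed
  then have "accepting A (case_nat \<sigma> v) (case_nat q r)"
    using fin unfolding accepting_def by (meson finite_imageI finite_insert finite_subset)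
  moreover have "is_word A (case_nat \<sigma> v)"
    using v wf_trans_in_states[OF assms(1,2)] unfolding is_word_def by (simp split: nat.split)
  ultimately show ?thesis unfolding lang_def by blast
qed

lemma lang_tail:
  assumes "case_nat \<sigma> v \<in> lang A q"
  obtains t where "(q, \<sigma>, t) \<in> trans A" "v \<in> lang A t"
proof -
  obtain r where w: "is_word A (case_nat \<sigma> v)" and r: "is_run A q (case_nat \<sigma> v) r"
    and fin: "accepting A (case_nat \<sigma> v) r"
    using assms unfolding lang_def by blast
  have "{i. (r (Suc i), v i, r (Suc (Suc i))) \<in> acc A}
      = Suc -` {i. (r i, case_nat \<sigma> v i, r (Suc i)) \<in> acc A}"
    by auto
  then have "accepting A v (\<lambda>n. r (Suc n))"
    using finite_vimageI[OF fin[unfolded accepting_def] inj_Suc] unfolding accepting_def by simp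
  moreover have "is_run A (r 1) v (\<lambda>n. r (Suc n))" "is_word A v"
    using r w unfolding is_run_def is_word_def by (auto dest: spec[of _ "Suc _"])
  moreover have "(q, \<sigma>, r 1) \<in> trans A"
    using r unfolding is_run_def by (metis One_nat_def nat.case(1))
  ultimately show ?thesis using that unfolding lang_def by blast
qed

lemma lang_residual:
  assumes "wf_tncw A" "sem_det A" "(q, \<sigma>, t) \<in> trans A"
  shows "lang A t = {v. case_nat \<sigma> v \<in> lang A q}"
proof (intro equalityI subsetI CollectI)
  fix v assume "v \<in> lang A t"
  then show "case_nat \<sigma> v \<in> lang A q" by (rule lang_prepend[OF assms(1,3)])
next
  fix v assume "v \<in> {v. case_nat \<sigma> v \<in> lang A q}"
  then have "case_nat \<sigma> v \<in> lang A q" by simp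
  then obtain t' where "(q, \<sigma>, t') \<in> trans A" "v \<in> lang A t'"
    by (rule lang_tail)
  moreover have "lequiv A t t'" using assms(2,3) calculation(1) unfolding sem_det_def by blast
  ultimately show "v \<in> lang A t" unfolding lequiv_def by simp
qed

lemma lang_safe_prepend:
  assumes "wf_tncw A" "(q, \<sigma>, t) \<in> safe_trans A" "v \<in> lang_safe A t"
  shows "case_nat \<sigma> v \<in> lang_safe A q"
proof -
  obtain r where "is_word A v" "r 0 = t" "\<forall>i. (r i, v i, r (Suc i)) \<in> safe_trans A"
    using assms(3) unfolding lang_safe_def by blast
  moreover have "\<sigma> \<in> alph A"
    using wf_trans_in_states[OF assms(1)] assms(2) safe_trans_subset_trans by blast
  ultimately show ?thesis using assms(2) unfolding lang_safe_def is_word_def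
    by (intro CollectI conjI exI[of _ "case_nat q r"]) (auto split: nat.split)
qed

lemma lang_safe_tail:
  assumes "case_nat \<sigma> v \<in> lang_safe A q"
  obtains t where "(q, \<sigma>, t) \<in> safe_trans A" "v \<in> lang_safe A t"
proof -
  obtain r where w: "is_word A (case_nat \<sigma> v)" and r: "r 0 = q"
    "\<forall>i. (r i, case_nat \<sigma> v i, r (Suc i)) \<in> safe_trans A"
    using assms unfolding lang_safe_def by blast
  have "(q, \<sigma>, r 1) \<in> safe_trans A"
    using r by (metis One_nat_def nat.case(1))
  moreover have "v \<in> lang_safe A (r 1)"
    using r w unfolding lang_safe_def is_word_def
    by (auto dest: spec[of _ "Suc _"] intro!: exI[of _ "\<lambda>n. r (Suc n)"])
  ultimately show ?thesis using that by blast
qed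

lemma lang_safe_residual:
  assumes "wf_tncw A" "safe_det A" "(q, \<sigma>, t) \<in> safe_trans A"
  shows "lang_safe A t = {v. case_nat \<sigma> v \<in> lang_safe A q}"
proof (intro equalityI subsetI CollectI)
  fix v assume "v \<in> lang_safe A t"
  then show "case_nat \<sigma> v \<in> lang_safe A q" by (rule lang_safe_prepend[OF assms(1,3)])
next
  fix v assume "v \<in> {v. case_nat \<sigma> v \<in> lang_safe A q}"
  then have "case_nat \<sigma> v \<in> lang_safe A q" by simp
  then obtain t' where "(q, \<sigma>, t') \<in> safe_trans A" "v \<in> lang_safe A t'"
    by (rule lang_safe_tail)
  moreover have "t' = t"
    using assms(2,3) calculation(1) unfolding safe_det_def succ_safe_def by blast
  ultimately show "v \<in> lang_safe A t" by simp
qed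

lemma normal_safe_trans_continues:
  assumes "normal A" "(q, \<sigma>, t) \<in> safe_trans A"
  shows "\<exists>\<tau> t'. (t, \<tau>, t') \<in> safe_trans A"
proof -
  have "(t, q) \<in> (safe_edges A)\<^sup>*"
    using assms unfolding normal_def safe_edges_def by blast
  then show ?thesis
  proof (cases rule: converse_rtranclE)
    case base then show ?thesis using assms(2) by blast
  next
    case (step y) then show ?thesis unfolding safe_edges_def by blast
  qed
qed

lemma normal_lang_safe_nonempty:
  fixes A :: "('a, 'q) tncw"
  assumes "wf_tncw A" "normal A" "(q, \<sigma>, t) \<in> safe_trans A"
  shows "lang_safe A t \<noteq> {}"
proof -
  define P where "P n y \<longleftrightarrow> (\<exists>y'. (fst y, snd y, y') \<in> safe_trans A) \<and> (n = 0 \<longrightarrow> fst y = t)"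
    for n :: nat and y :: "'q \<times> 'a"
  have "\<exists>y. P 0 y"
    using normal_safe_trans_continues[OF assms(2,3)] unfolding P_def by auto
  moreover have "\<exists>y'. P (Suc n) y' \<and> (fst y, snd y, fst y') \<in> safe_trans A" if Py: "P n y" for n y
  proof -
    obtain y' where y': "(fst y, snd y, y') \<in> safe_trans A" using Py unfolding P_def by blast
    then obtain \<tau> y'' where "(y', \<tau>, y'') \<in> safe_trans A"
      using normal_safe_trans_continues[OF assms(2)] by blast
    then show ?thesis using y' unfolding P_def by (intro exI[of _ "(y', \<tau>)"]) auto
  qed
  ultimately obtain f
    where f: "\<And>n. P n (f n) \<and> (fst (f n), snd (f n), fst (f (Suc n))) \<in> safe_trans A"
    using dependent_nat_choice[of P "\<lambda>_ y y'. (fst y, snd y, fst y') \<in> safe_trans A"] by blast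
  have "is_word A (\<lambda>n. snd (f n))"
    using f wf_trans_in_states[OF assms(1)] safe_trans_subset_trans unfolding is_word_def by blast
  then have "(\<lambda>n. snd (f n)) \<in> lang_safe A t"
    using f[of 0] f unfolding lang_safe_def P_def
    by (intro CollectI conjI exI[of _ "\<lambda>n. fst (f n)"]) auto
  then show ?thesis by blast
qed

lemma safe_succ_if_lang_safe_subset:
  assumes "wf_tncw A" "normal A" "lang_safe A q \<subseteq> lang_safe A q'" "(q, \<sigma>, t) \<in> safe_trans A"
  obtains t' where "(q', \<sigma>, t') \<in> safe_trans A"
proof -
  obtain v where "v \<in> lang_safe A t" using normal_lang_safe_nonempty[OF assms(1,2,4)] by blast
  then have "case_nat \<sigma> v \<in> lang_safe A q'"
    using lang_safe_prepend[OF assms(1,4)] assms(3) by blast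
  then show ?thesis using that by (blast elim: lang_safe_tail)
qed

lemma safe_below_safe_step:
  assumes "wf_tncw A" "sem_det A" "safe_det A" "normal A"
    and "safe_below A q q'" "(q, \<sigma>, t) \<in> safe_trans A"
  obtains t' where "(q', \<sigma>, t') \<in> safe_trans A" "safe_below A t t'"
proof -
  obtain t' where t': "(q', \<sigma>, t') \<in> safe_trans A"
    using assms(5) unfolding safe_below_def
    by (blast intro: safe_succ_if_lang_safe_subset[OF assms(1,4) _ assms(6)])
  have "safe_below A t t'"
    using assms(5) lang_safe_residual[OF assms(1,3)] assms(6) t'
      lang_residual[OF assms(1,2) subsetD[OF safe_trans_subset_trans assms(6)]]
      lang_residual[OF assms(1,2) subsetD[OF safe_trans_subset_trans t']]
    unfolding safe_below_def lequiv_def by auto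
  then show ?thesis using t' that by blast
qed

section \<open>Quotients by strong equivalence\<close>

lemma cls_eq_iff:
  "p \<in> states B \<Longrightarrow> q \<in> states B \<Longrightarrow> cls B p = cls B q \<longleftrightarrow> strong_equiv B p q"
  unfolding cls_def strong_equiv_def lequiv_def by blast

lemma trans_quot_aut_iff:
  "(X, \<sigma>, Y) \<in> trans (quot_aut B) \<longleftrightarrow>
     (\<exists>q p. X = cls B q \<and> Y = cls B p \<and> q \<in> states B \<and> p \<in> states B \<and> (q, \<sigma>, p) \<in> trans B)"
  unfolding quot_aut_def by auto

lemma acc_quot_aut_iff:
  "(X, \<sigma>, Y) \<in> acc (quot_aut B) \<longleftrightarrow>
     (\<exists>q p. X = cls B q \<and> Y = cls B p \<and> q \<in> states B \<and> p \<in> states B \<and> (q, \<sigma>, p) \<in> acc B)"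
  unfolding quot_aut_def by auto

lemma quot_aut_simps [simp]:
  "alph (quot_aut B) = alph B" "states (quot_aut B) = cls B ` states B"
  unfolding quot_aut_def by simp_all

locale alpha_max_tncw =
  fixes B :: "('a, 'q) tncw"
  assumes wf: "wf_tncw B" and sem_det: "sem_det B" and safe_det: "safe_det B"
    and normal: "normal B" and alpha_max: "alpha_max_up_to_hom B"
begin

lemma strong_equiv_safe_succ:
  assumes "strong_equiv B q q'" "(q, \<sigma>, t) \<in> safe_trans B"
  obtains t' where "(q', \<sigma>, t') \<in> safe_trans B"
  using safe_succ_if_lang_safe_subset[OF wf normal _ assms(2)] assms(1)
  unfolding strong_equiv_def by blast

lemma strong_equiv_safe_imp_not_acc:
  assumes "strong_equiv B q q'" "(q, \<sigma>, t) \<in> safe_trans B"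
  shows "(q', \<sigma>, t') \<notin> acc B"
proof
  assume "(q', \<sigma>, t') \<in> acc B"
  moreover obtain t'' where "(q', \<sigma>, t'') \<in> safe_trans B"
    using strong_equiv_safe_succ[OF assms] .
  ultimately show False
    using alpha_max
    unfolding alpha_max_up_to_hom_def alpha_homogenous_def succ_acc_def succ_safe_def by blast
qed

lemma strong_equiv_trans_transfer:
  assumes "strong_equiv B q q'" "(q', \<sigma>, p') \<in> trans B" "q \<in> states B"
  obtains p where "(q, \<sigma>, p) \<in> trans B" "strong_equiv B p p'"
proof (cases "(q', \<sigma>, p') \<in> acc B")
  case False
  then have safe': "(q', \<sigma>, p') \<in> safe_trans B" using assms(2) unfolding safe_trans_def by blast
  obtain p where safe: "(q, \<sigma>, p) \<in> safe_trans B" and "safe_below B p' p"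
    using safe_below_safe_step[OF wf sem_det safe_det normal _ safe'] assms(1)
    unfolding strong_equiv_iff_safe_below by blast
  moreover obtain p'' where "(q', \<sigma>, p'') \<in> safe_trans B" "safe_below B p p''"
    using safe_below_safe_step[OF wf sem_det safe_det normal _ safe] assms(1)
    unfolding strong_equiv_iff_safe_below by blast
  moreover have "p'' = p'"
    using safe_det safe' calculation(3) unfolding safe_det_def succ_safe_def by blast
  ultimately show ?thesis
    using that safe_trans_subset_trans unfolding strong_equiv_iff_safe_below by blast
next
  case True
  (* q has no safe sigma-successor either, so alpha-maximality of B supplies (q, sigma, p') *)
  have no_safe: "succ_safe B q \<sigma> = {}"
    using strong_equiv_safe_imp_not_acc[OF assms(1)] True unfolding succ_safe_def by blast
  have in_states: "\<sigma> \<in> alph B" "p' \<in> states B"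
    using wf_trans_in_states[OF wf assms(2)] by auto
  obtain s where s: "(q, \<sigma>, s) \<in> trans B"
    using wf_trans_total[OF wf assms(3) in_states(1)] by blast
  have "lequiv B s p'"
    using lang_residual[OF wf sem_det s] lang_residual[OF wf sem_det assms(2)] assms(1)
    unfolding strong_equiv_def lequiv_def by simp
  then have "(q, \<sigma>, p') \<in> trans B"
    using alpha_max assms(3) in_states no_safe s
    unfolding alpha_max_up_to_hom_def allowed_trans_def by blast
  then show ?thesis using that unfolding strong_equiv_def lequiv_def by blast
qed

lemma safe_trans_quot_aut:
  assumes "(q, \<sigma>, p) \<in> safe_trans B"
  shows "(cls B q, \<sigma>, cls B p) \<in> safe_trans (quot_aut B)"
proof -
  have trans: "(q, \<sigma>, p) \<in> trans B" using assms safe_trans_subset_trans by blast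
  then have states: "q \<in> states B" "p \<in> states B" using wf_trans_in_states[OF wf] by simp_all
  have "(cls B q, \<sigma>, cls B p) \<notin> acc (quot_aut B)"
  proof
    assume "(cls B q, \<sigma>, cls B p) \<in> acc (quot_aut B)"
    then obtain q1 p1 where q1: "cls B q = cls B q1" "q1 \<in> states B" "(q1, \<sigma>, p1) \<in> acc B"
      unfolding acc_quot_aut_iff by blast
    then have "strong_equiv B q q1" using cls_eq_iff[OF states(1) q1(2)] by simp
    then show False using strong_equiv_safe_imp_not_acc[OF _ assms] q1(3) by blast
  qed
  moreover have "(cls B q, \<sigma>, cls B p) \<in> trans (quot_aut B)"
    unfolding trans_quot_aut_iff using trans states by fast
  ultimately show ?thesis unfolding safe_trans_def by blast
qed

lemma lang_quot_aut_subset: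
  assumes "q \<in> states B"
  shows "lang (quot_aut B) (cls B q) \<subseteq> lang B q"
proof
  fix w assume "w \<in> lang (quot_aut B) (cls B q)"
  then obtain R where w: "is_word B w" and R: "is_run (quot_aut B) (cls B q) w R"
    and fin: "accepting (quot_aut B) w R"
    unfolding lang_def is_word_def by auto
  define P where "P n x \<longleftrightarrow> x \<in> states B \<and> cls B x = R n \<and> (n = 0 \<longrightarrow> x = q)" for n x
  have "\<exists>x'. P (Suc n) x' \<and> (x, w n, x') \<in> trans B" if Px: "P n x" for n x
  proof -
    obtain q' p' where q': "R n = cls B q'" "R (Suc n) = cls B p'" "q' \<in> states B" "p' \<in> states B"
      "(q', w n, p') \<in> trans B"
      using R unfolding is_run_def trans_quot_aut_iff by meson
    have "strong_equiv B x q'" using Px q' cls_eq_iff[of x B q'] unfolding P_def by simp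
    then obtain p where p: "(x, w n, p) \<in> trans B" "strong_equiv B p p'"
      using strong_equiv_trans_transfer[OF _ q'(5)] Px unfolding P_def by blast
    moreover have "p \<in> states B" using wf_trans_in_states[OF wf p(1)] by simp
    ultimately show ?thesis using q' cls_eq_iff[of p B p'] unfolding P_def by auto
  qed
  moreover have "P 0 q" using assms R unfolding P_def is_run_def by simp
  ultimately obtain f where f: "\<And>n. P n (f n) \<and> (f n, w n, f (Suc n)) \<in> trans B"
    using dependent_nat_choice[of P "\<lambda>n x x'. (x, w n, x') \<in> trans B"] by blast
  have "{i. (f i, w i, f (Suc i)) \<in> acc B} \<subseteq> {i. (R i, w i, R (Suc i)) \<in> acc (quot_aut B)}"
  proof (intro subsetI CollectI)
    fix i assume "i \<in> {i. (f i, w i, f (Suc i)) \<in> acc B}"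
    then show "(R i, w i, R (Suc i)) \<in> acc (quot_aut B)"
      unfolding acc_quot_aut_iff using f[of i] f[of "Suc i"] unfolding P_def
      by (intro exI[of _ "f i"] exI[of _ "f (Suc i)"]) simp
  qed
  then have "accepting B w f"
    using fin unfolding accepting_def by (rule finite_subset)
  moreover have "is_run B q w f" using f[of 0] f unfolding is_run_def P_def by simp
  ultimately show "w \<in> lang B q" using w unfolding lang_def by blast
qed

lemma lang_subset_lang_quot_aut:
  assumes "q \<in> states B"
  shows "lang B q \<subseteq> lang (quot_aut B) (cls B q)"
proof
  fix w assume "w \<in> lang B q"
  then obtain r where w: "is_word B w" and r: "is_run B q w r" and fin: "accepting B w r"
    unfolding lang_def by blast
  have r_states: "r i \<in> states B" for i
    using r wf_trans_in_states[OF wf] unfolding is_run_def by blast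
  have "is_run (quot_aut B) (cls B q) w (\<lambda>i. cls B (r i))"
    using r r_states unfolding is_run_def trans_quot_aut_iff by fast
  moreover have "{i. (cls B (r i), w i, cls B (r (Suc i))) \<in> acc (quot_aut B)}
      \<subseteq> {i. (r i, w i, r (Suc i)) \<in> acc B}"
  proof (intro subsetI CollectI, rule ccontr)
    fix i assume acc: "i \<in> {i. (cls B (r i), w i, cls B (r (Suc i))) \<in> acc (quot_aut B)}"
      and "(r i, w i, r (Suc i)) \<notin> acc B"
    then have "(r i, w i, r (Suc i)) \<in> safe_trans B"
      using r unfolding is_run_def safe_trans_def by blast
    then show False using safe_trans_quot_aut acc unfolding safe_trans_def by blast
  qed
  then have "accepting (quot_aut B) w (\<lambda>i. cls B (r i))"
    using fin unfolding accepting_def by (rule finite_subset)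
  ultimately show "w \<in> lang (quot_aut B) (cls B q)" using w unfolding lang_def is_word_def by auto
qed

lemma lang_quot_aut: "q \<in> states B \<Longrightarrow> lang (quot_aut B) (cls B q) = lang B q"
  using lang_quot_aut_subset lang_subset_lang_quot_aut by blast

lemma alpha_homogenous_quot_aut: "alpha_homogenous (quot_aut B)"
  unfolding alpha_homogenous_def
proof (intro allI, rule ccontr)
  fix X \<sigma>
  assume "\<not> (succ_acc (quot_aut B) X \<sigma> = {} \<or> succ_safe (quot_aut B) X \<sigma> = {})"
  then obtain Y1 Y2 where acc: "(X, \<sigma>, Y1) \<in> acc (quot_aut B)"
    and safe: "(X, \<sigma>, Y2) \<in> trans (quot_aut B)" "(X, \<sigma>, Y2) \<notin> acc (quot_aut B)"
    unfolding succ_acc_def succ_safe_def safe_trans_def by blast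
  obtain q1 p1 where q1: "X = cls B q1" "q1 \<in> states B" "(q1, \<sigma>, p1) \<in> acc B"
    using acc unfolding acc_quot_aut_iff by blast
  obtain q2 p2 where q2: "X = cls B q2" "Y2 = cls B p2" "q2 \<in> states B" "p2 \<in> states B"
    "(q2, \<sigma>, p2) \<in> trans B"
    using safe(1) unfolding trans_quot_aut_iff by blast
  have "(q2, \<sigma>, p2) \<in> safe_trans B"
    using q2 safe(2) unfolding safe_trans_def acc_quot_aut_iff by blast
  moreover have "strong_equiv B q2 q1" using q1 q2 cls_eq_iff[OF q2(3) q1(2)] by simp
  ultimately show False using strong_equiv_safe_imp_not_acc q1(3) by blast
qed

lemma alpha_max_up_to_hom_quot_aut: "alpha_max_up_to_hom (quot_aut B)"
  unfolding alpha_max_up_to_hom_def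
proof (intro conjI alpha_homogenous_quot_aut ballI impI allI)
  fix X \<sigma> Y
  assume no_safe: "succ_safe (quot_aut B) X \<sigma> = {}" and "allowed_trans (quot_aut B) X \<sigma> Y"
  then obtain Y' where Y': "lequiv (quot_aut B) Y' Y" "(X, \<sigma>, Y') \<in> trans (quot_aut B)"
    and "Y \<in> states (quot_aut B)"
    unfolding allowed_trans_def by blast
  then obtain p where p: "Y = cls B p" "p \<in> states B" by auto
  obtain q1 p1 where q1: "X = cls B q1" "Y' = cls B p1" "q1 \<in> states B" "p1 \<in> states B"
    "(q1, \<sigma>, p1) \<in> trans B"
    using Y'(2) unfolding trans_quot_aut_iff by blast
  have "succ_safe B q1 \<sigma> = {}"
    using no_safe safe_trans_quot_aut q1(1) unfolding succ_safe_def by blast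
  moreover have "lequiv B p1 p"
    using Y'(1) q1 p lang_quot_aut unfolding lequiv_def by simp
  ultimately have "(q1, \<sigma>, p) \<in> trans B"
    using alpha_max q1 p wf_trans_in_states[OF wf q1(5)]
    unfolding alpha_max_up_to_hom_def allowed_trans_def by blast
  then show "(X, \<sigma>, Y) \<in> trans (quot_aut B)"
    unfolding trans_quot_aut_iff using q1 p by fast
qed

end

section \<open>The automaton B_S\<close>

locale frontier_construction =
  fixes A :: "('a, 'q) tncw" and SS :: "'q set set" and q0 :: 'q
  assumes wf: "wf_tncw A" and nice: "nice A" and frontier: "frontier A SS"
    and admissible: "admissible_init A SS q0"
begin

abbreviation Q_S :: "'q set" where "Q_S \<equiv> \<Union>SS"

abbreviation B :: "('a, 'q) tncw" where "B \<equiv> B_aut A SS q0"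

lemma normal: "normal A" and safe_det: "safe_det A" and sem_det: "sem_det A"
  using nice unfolding nice_def by auto

lemma Q_S_subset_states: "Q_S \<subseteq> states A"
  using frontier unfolding frontier_def safe_comps_def by blast

lemma safe_trans_closed:
  assumes "x \<in> Q_S" "(x, \<sigma>, t) \<in> safe_trans A"
  shows "t \<in> Q_S"
proof -
  obtain S where S: "S \<in> SS" "x \<in> S" using assms(1) by blast
  then obtain q where "S = {s \<in> states A. (q, s) \<in> (safe_edges A)\<^sup>* \<and> (s, q) \<in> (safe_edges A)\<^sup>*}"
    using frontier unfolding frontier_def safe_comps_def by blast
  moreover have "(x, t) \<in> safe_edges A" using assms(2) unfolding safe_edges_def by blast
  moreover have "(t, x) \<in> (safe_edges A)\<^sup>*"
    using normal calculation(2) unfolding normal_def by blast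
  moreover have "t \<in> states A"
    using wf_trans_in_states[OF wf] assms(2) safe_trans_subset_trans by blast
  ultimately have "t \<in> S" using S(2) by (auto intro: rtrancl_into_rtrancl rtrancl_trans)
  then show ?thesis using S(1) by blast
qed

lemma exists_safe_above:
  assumes "x \<in> states A"
  obtains b where "b \<in> Q_S" "safe_below A x b"
proof -
  let ?S = "{s \<in> states A. (x, s) \<in> (safe_edges A)\<^sup>* \<and> (s, x) \<in> (safe_edges A)\<^sup>*}"
  have "?S \<in> safe_comps A" using assms unfolding safe_comps_def by blast
  then obtain S' where "S' \<in> SS" "H_rel A ?S S'"
    using frontier unfolding frontier_def by blast
  then obtain q1 q1' where "S' \<in> SS" "q1 \<in> ?S" "q1' \<in> S'" "safe_below A q1 q1'"
    unfolding H_rel_def by blast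
  then have "(q1, x) \<in> (safe_edges A)\<^sup>*" and "\<exists>b \<in> Q_S. safe_below A q1 b" by blast+
  then have "\<exists>b \<in> Q_S. safe_below A x b"
  proof (induction rule: rtrancl_induct)
    case (step z z')
    then obtain b \<sigma> where b: "b \<in> Q_S" "safe_below A z b" "(z, \<sigma>, z') \<in> safe_trans A"
      unfolding safe_edges_def by blast
    then obtain b' where "(b, \<sigma>, b') \<in> safe_trans A" "safe_below A z' b'"
      using safe_below_safe_step[OF wf sem_det safe_det normal] by blast
    then show ?case using safe_trans_closed b(1) by blast
  qed
  then show ?thesis using that by blast
qed

lemma B_simps [simp]: "states B = Q_S" "alph B = alph A" "init B = q0"
  unfolding B_aut_def by simp_all

lemma safe_trans_B_iff:
  "(q, \<sigma>, s) \<in> safe_trans B \<longleftrightarrow> q \<in> Q_S \<and> (q, \<sigma>, s) \<in> safe_trans A"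
  using wf_trans_in_states[OF wf] safe_trans_subset_trans
  unfolding safe_trans_def B_aut_def succ_safe_def by auto

lemma acc_B_iff:
  "(q, \<sigma>, s) \<in> acc B \<longleftrightarrow> q \<in> Q_S \<and> \<sigma> \<in> alph A \<and> succ_safe A q \<sigma> = {} \<and> s \<in> Q_S
     \<and> (\<exists>s' \<in> succ_acc A q \<sigma>. lequiv A s s')"
  unfolding B_aut_def by simp

lemma trans_B_iff: "(q, \<sigma>, s) \<in> trans B \<longleftrightarrow> (q, \<sigma>, s) \<in> safe_trans B \<or> (q, \<sigma>, s) \<in> acc B"
  unfolding safe_trans_def B_aut_def by auto

lemma trans_B_imp_trans_A:
  assumes "(q, \<sigma>, s) \<in> trans B"
  obtains s' where "(q, \<sigma>, s') \<in> trans A" "lequiv A s s'"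
  using assms wf_acc_subset_trans[OF wf] safe_trans_subset_trans
  unfolding trans_B_iff safe_trans_B_iff acc_B_iff succ_acc_def lequiv_def by blast

lemma trans_B_in_Q_S: "(q, \<sigma>, s) \<in> trans B \<Longrightarrow> q \<in> Q_S \<and> \<sigma> \<in> alph A \<and> s \<in> Q_S"
  using safe_trans_closed wf_trans_in_states[OF wf] safe_trans_subset_trans
  unfolding trans_B_iff safe_trans_B_iff acc_B_iff by blast

lemma lang_residual_B:
  assumes "(q, \<sigma>, s) \<in> trans B"
  shows "lang A s = {v. case_nat \<sigma> v \<in> lang A q}"
  using trans_B_imp_trans_A[OF assms] lang_residual[OF wf sem_det] unfolding lequiv_def by metis

lemma lang_B_subset_lang:
  assumes "w \<in> lang B x"
  shows "w \<in> lang A x"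
proof -
  obtain r where w: "is_word A w" and r: "is_run B x w r" and fin: "accepting B w r"
    using assms unfolding lang_def is_word_def by auto
  obtain k where k: "\<And>i. (r i, w i, r (Suc i)) \<in> acc B \<Longrightarrow> i < k"
    using fin unfolding accepting_def finite_nat_set_iff_bounded by blast
  have "(r i, w i, r (Suc i)) \<in> safe_trans A" if "k \<le> i" for i
    using r k[of i] that unfolding is_run_def trans_B_iff safe_trans_B_iff by fastforce
  then have "(\<lambda>n. w (n + k)) \<in> lang_safe A (r k)"
    using w unfolding lang_safe_def is_word_def by (auto intro!: exI[of _ "\<lambda>n. r (n + k)"])
  then have "(\<lambda>n. w (n + k)) \<in> lang A (r k)" by (rule subsetD[OF lang_safe_subset_lang])
  moreover have "lang A (r (Suc i)) \<subseteq> {v. case_nat (w i) v \<in> lang A (r i)}" for i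
    using lang_residual_B r unfolding is_run_def by blast
  ultimately show ?thesis
    using suffix_residual_chain[of k "lang A" r w] r unfolding is_run_def by simp
qed

definition dominator :: "'q \<Rightarrow> 'q" where
  "dominator y = (SOME b. b \<in> Q_S \<and> safe_below A y b)"

lemma dominator_safe_above: "y \<in> states A \<Longrightarrow> dominator y \<in> Q_S \<and> safe_below A y (dominator y)"
  unfolding dominator_def by (rule someI_ex) (blast elim: exists_safe_above)

(* A run of B on w that follows the safe transitions of A while they exist and otherwise
   jumps to a dominator of the corresponding state of the A-run r. *)
definition shadow_run :: "(nat \<Rightarrow> 'a) \<Rightarrow> (nat \<Rightarrow> 'q) \<Rightarrow> nat \<Rightarrow> 'q" where
  "shadow_run w r = rec_nat (r 0) (\<lambda>i g. if succ_safe A g (w i) = {}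
     then dominator (r (Suc i)) else (THE s. s \<in> succ_safe A g (w i)))"

context
  fixes w :: "nat \<Rightarrow> 'a" and r :: "nat \<Rightarrow> 'q" and x :: 'q
  assumes run: "is_run A x w r" and x: "x \<in> Q_S"
begin

abbreviation shadow :: "nat \<Rightarrow> 'q" where "shadow \<equiv> shadow_run w r"

lemma shadow_run_0: "shadow 0 = x"
  using run unfolding shadow_run_def is_run_def by simp

lemma shadow_run_Suc_stuck:
  "succ_safe A (shadow i) (w i) = {} \<Longrightarrow> shadow (Suc i) = dominator (r (Suc i))"
  unfolding shadow_run_def by simp

lemma shadow_run_Suc_safe: "(shadow i, w i, s) \<in> safe_trans A \<Longrightarrow> shadow (Suc i) = s"
  using safe_det unfolding shadow_run_def safe_det_def succ_safe_def by auto

lemma run_in_states: "r i \<in> states A"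
  using run wf_trans_in_states[OF wf] unfolding is_run_def by blast

lemma shadow_run_lequiv: "shadow i \<in> Q_S \<and> lequiv A (shadow i) (r i)"
proof (induction i)
  case 0
  then show ?case using shadow_run_0 run x unfolding is_run_def lequiv_def by simp
next
  case (Suc i)
  show ?case
  proof (cases "succ_safe A (shadow i) (w i) = {}")
    case True
    then show ?thesis
      using shadow_run_Suc_stuck dominator_safe_above[OF run_in_states]
      unfolding safe_below_def lequiv_def by simp
  next
    case False
    then obtain s where s: "(shadow i, w i, s) \<in> safe_trans A" unfolding succ_safe_def by blast
    have "lang A s = lang A (r (Suc i))"
      using lang_residual[OF wf sem_det] s safe_trans_subset_trans run Suc.IH
      unfolding is_run_def lequiv_def by blast
    moreover have "s \<in> Q_S" using safe_trans_closed s Suc.IH by blast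
    ultimately show ?thesis using shadow_run_Suc_safe[OF s] unfolding lequiv_def by simp
  qed
qed

lemma shadow_run_trans_B: "(shadow i, w i, shadow (Suc i)) \<in> trans B"
proof (cases "succ_safe A (shadow i) (w i) = {}")
  case True
  have shadow_i: "shadow i \<in> Q_S" "lequiv A (shadow i) (r i)" using shadow_run_lequiv by blast+
  have ri: "(r i, w i, r (Suc i)) \<in> trans A" using run unfolding is_run_def by blast
  then have \<sigma>: "w i \<in> alph A" using wf_trans_in_states[OF wf] by blast
  then obtain s where s: "(shadow i, w i, s) \<in> trans A"
    using wf_trans_total[OF wf] shadow_i(1) Q_S_subset_states by blast
  have "lang A s = lang A (r (Suc i))"
    using lang_residual[OF wf sem_det s] lang_residual[OF wf sem_det ri] shadow_i(2)
    unfolding lequiv_def by simp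
  then have "lequiv A (shadow (Suc i)) s"
    using shadow_run_Suc_stuck[OF True] dominator_safe_above[OF run_in_states]
    unfolding safe_below_def lequiv_def by simp
  moreover have "s \<in> succ_acc A (shadow i) (w i)"
    using s True unfolding succ_acc_def succ_safe_def safe_trans_def by blast
  moreover have "shadow (Suc i) \<in> Q_S" using shadow_run_lequiv by blast
  ultimately have "(shadow i, w i, shadow (Suc i)) \<in> acc B"
    unfolding acc_B_iff using shadow_i(1) \<sigma> True by blast
  then show ?thesis unfolding trans_B_iff by blast
next
  case False
  then obtain s where s: "(shadow i, w i, s) \<in> safe_trans A" unfolding succ_safe_def by blast
  then have "(shadow i, w i, shadow (Suc i)) \<in> safe_trans B"
    using shadow_run_Suc_safe[OF s] shadow_run_lequiv unfolding safe_trans_B_iff by simp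
  then show ?thesis unfolding trans_B_iff by blast
qed

lemma shadow_run_keeps_dominance:
  assumes "(r j, w j, r (Suc j)) \<in> safe_trans A" "safe_below A (r j) (shadow j)"
  shows "succ_safe A (shadow j) (w j) \<noteq> {} \<and> safe_below A (r (Suc j)) (shadow (Suc j))"
proof -
  obtain t where "(shadow j, w j, t) \<in> safe_trans A" "safe_below A (r (Suc j)) t"
    using safe_below_safe_step[OF wf sem_det safe_det normal assms(2,1)] by blast
  then show ?thesis using shadow_run_Suc_safe unfolding succ_safe_def by auto
qed

(* Once the A-run r has become safe, a jump of the shadow run lands on a state dominating r,
   and from then on the shadow run can always follow r safely. *)
lemma shadow_run_not_stuck_after:
  assumes safe: "\<And>i. k \<le> i \<Longrightarrow> (r i, w i, r (Suc i)) \<in> safe_trans A"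
    and stuck: "k \<le> i" "succ_safe A (shadow i) (w i) = {}" and "i < j"
  shows "succ_safe A (shadow j) (w j) \<noteq> {}"
proof -
  have dominates: "safe_below A (r (Suc i + d)) (shadow (Suc i + d))" for d
  proof (induction d)
    case 0
    then show ?case
      using shadow_run_Suc_stuck[OF stuck(2)] dominator_safe_above[OF run_in_states] by simp
  next
    case (Suc d)
    then show ?case using shadow_run_keeps_dominance safe stuck(1) by simp
  qed
  obtain d where "j = Suc i + d" using \<open>i < j\<close> less_imp_Suc_add by fastforce
  then show ?thesis using shadow_run_keeps_dominance[OF _ dominates] safe stuck(1) by simp
qed

end

lemma lang_subset_lang_B:
  assumes "x \<in> Q_S" "w \<in> lang A x"
  shows "w \<in> lang B x"
proof -
  obtain r where w: "is_word A w" and r: "is_run A x w r" and fin: "accepting A w r"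
    using assms(2) unfolding lang_def by blast
  obtain k where k: "\<And>i. (r i, w i, r (Suc i)) \<in> acc A \<Longrightarrow> i < k"
    using fin unfolding accepting_def finite_nat_set_iff_bounded by blast
  have safe: "(r i, w i, r (Suc i)) \<in> safe_trans A" if "k \<le> i" for i
    using r k[of i] that unfolding is_run_def safe_trans_def by fastforce
  let ?g = "shadow_run w r"
  let ?stuck = "{i. succ_safe A (?g i) (w i) = {}}"
  have "finite ?stuck"
  proof (cases "\<exists>i \<ge> k. i \<in> ?stuck")
    case True
    then obtain i where "k \<le> i" "i \<in> ?stuck" by blast
    then have "?stuck \<subseteq> {..i}"
      using shadow_run_not_stuck_after[OF r assms(1) safe] by (auto simp: not_le[symmetric])
    then show ?thesis by (rule finite_subset) simp
  next
    case False
    then have "?stuck \<subseteq> {..<k}" using not_less by blast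
    then show ?thesis by (rule finite_subset) simp
  qed
  moreover have "{i. (?g i, w i, ?g (Suc i)) \<in> acc B} \<subseteq> ?stuck" unfolding acc_B_iff by blast
  ultimately have "accepting B w ?g" unfolding accepting_def by (rule finite_subset[rotated])
  moreover have "is_run B x w ?g"
    using shadow_run_0[OF r assms(1)] shadow_run_trans_B[OF r assms(1)]
    unfolding is_run_def by blast
  ultimately show ?thesis using w unfolding lang_def is_word_def by auto
qed

lemma lang_B: "x \<in> Q_S \<Longrightarrow> lang B x = lang A x"
  using lang_subset_lang_B lang_B_subset_lang by blast

lemma wf_B: "wf_tncw B"
proof -
  have "finite Q_S" using wf Q_S_subset_states finite_subset unfolding wf_tncw_def by blast
  moreover have "q0 \<in> Q_S"
    using admissible unfolding admissible_init_def by (cases "init A \<in> Q_S") simp_all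
  moreover have "\<exists>s. (q, \<sigma>, s) \<in> trans B" if q: "q \<in> Q_S" and \<sigma>: "\<sigma> \<in> alph A" for q \<sigma>
  proof (cases "succ_safe A q \<sigma> = {}")
    case True
    obtain s where s: "(q, \<sigma>, s) \<in> trans A"
      using wf_trans_total[OF wf _ \<sigma>] q Q_S_subset_states by blast
    then have "s \<in> states A" using wf_trans_in_states[OF wf] by blast
    then obtain b where "b \<in> Q_S" "safe_below A s b" by (rule exists_safe_above)
    moreover have "s \<in> succ_acc A q \<sigma>"
      using s True unfolding succ_acc_def succ_safe_def safe_trans_def by blast
    ultimately have "(q, \<sigma>, b) \<in> acc B"
      unfolding acc_B_iff safe_below_def lequiv_def using q \<sigma> True by auto
    then show ?thesis unfolding trans_B_iff by blast
  next
    case False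
    then show ?thesis using q unfolding trans_B_iff safe_trans_B_iff succ_safe_def by blast
  qed
  moreover have "trans B \<subseteq> Q_S \<times> alph A \<times> Q_S" using trans_B_in_Q_S by fast
  moreover have "acc B \<subseteq> trans B" unfolding B_aut_def by auto
  ultimately show ?thesis using wf unfolding wf_tncw_def by simp
qed

lemma sem_det_B: "sem_det B"
  unfolding sem_det_def lequiv_def
  using lang_residual_B lang_B trans_B_in_Q_S by metis

lemma safe_det_B: "safe_det B"
  using safe_det unfolding safe_det_def succ_safe_def safe_trans_B_iff by blast

lemma normal_B: "normal B"
proof -
  have edges: "safe_edges B = {(q, s) \<in> safe_edges A. q \<in> Q_S}"
    unfolding safe_edges_def safe_trans_B_iff by blast
  have stays: "y \<in> Q_S \<and> (x, y) \<in> (safe_edges B)\<^sup>*"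
    if "(x, y) \<in> (safe_edges A)\<^sup>*" "x \<in> Q_S" for x y
    using that
  proof (induction rule: rtrancl_induct)
    case (step y z)
    have IH: "y \<in> Q_S" "(x, y) \<in> (safe_edges B)\<^sup>*" using step.IH step.prems by blast+
    obtain \<sigma> where "(y, \<sigma>, z) \<in> safe_trans A" using step.hyps(2) unfolding safe_edges_def by blast
    then have "z \<in> Q_S" using safe_trans_closed IH(1) by blast
    moreover have "(y, z) \<in> safe_edges B" unfolding edges using step.hyps(2) IH(1) by blast
    ultimately show ?case using IH(2) by (simp add: rtrancl_into_rtrancl)
  qed simp
  show ?thesis unfolding normal_def
  proof (intro allI impI)
    fix q s assume path: "(q, s) \<in> (safe_edges B)\<^sup>*"
    then show "(s, q) \<in> (safe_edges B)\<^sup>*"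
    proof (cases rule: converse_rtranclE)
      case (step y)
      then have q: "q \<in> Q_S" unfolding edges by blast
      have "safe_edges B \<subseteq> safe_edges A" unfolding edges by blast
      then have "(q, s) \<in> (safe_edges A)\<^sup>*" using rtrancl_mono path by blast
      then have "s \<in> Q_S" "(s, q) \<in> (safe_edges A)\<^sup>*"
        using stays[OF _ q] normal unfolding normal_def by blast+
      then show ?thesis using stays by blast
    qed simp
  qed
qed

lemma alpha_max_up_to_hom_B: "alpha_max_up_to_hom B"
  unfolding alpha_max_up_to_hom_def
proof (intro conjI ballI impI allI)
  show "alpha_homogenous B"
    unfolding alpha_homogenous_def succ_acc_def succ_safe_def
    using safe_trans_B_iff acc_B_iff unfolding succ_safe_def by blast
next
  fix q \<sigma> s
  assume q: "q \<in> states B" and \<sigma>: "\<sigma> \<in> alph B" and no_safe: "succ_safe B q \<sigma> = {}"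
    and "allowed_trans B q \<sigma> s"
  then obtain s' where s': "lequiv B s' s" "(q, \<sigma>, s') \<in> trans B" and s: "s \<in> Q_S"
    unfolding allowed_trans_def by auto
  have "(q, \<sigma>, s') \<in> acc B"
    using s'(2) no_safe unfolding trans_B_iff succ_safe_def by blast
  moreover have "lequiv A s s'"
    using s'(1) s s'(2) trans_B_in_Q_S lang_B unfolding lequiv_def by metis
  ultimately have "(q, \<sigma>, s) \<in> acc B"
    using s unfolding acc_B_iff lequiv_def by auto
  then show "(q, \<sigma>, s) \<in> trans B" unfolding trans_B_iff by blast
qed

lemma alpha_max_tncw_B: "alpha_max_tncw B"
  using wf_B sem_det_B safe_det_B normal_B alpha_max_up_to_hom_B by unfold_locales

end

theorem mainTheorem5:
  fixes A :: "('a, 'q) tncw" and SS :: "'q set set" and q0 :: 'q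
  assumes "wf_tncw A"
    and "gfg A"
    and "nice A"
    and "frontier A SS"
    and "admissible_init A SS q0"
  shows "alpha_max_up_to_hom (quot_aut (B_aut A SS q0))"
proof -
  interpret frontier_construction A SS q0
    using assms(1,3-5) by unfold_locales
  show ?thesis
    by (rule alpha_max_tncw.alpha_max_up_to_hom_quot_aut[OF alpha_max_tncw_B])
qed

end
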